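(* For the deterministic many-to-one interference channel, if a collection $A\subseteq\Gamma$ of constraints is consistent, then it is compatible.
   Context: Deterministic many-to-one interference channel with nonnegative integer gains $n_{ii}$ ($0\le i\le K$), $n_{0i}$ ($1\le i\le K$). Notation: $(a)^+=\max(a,0)$; $U_k=\{i:1\le i\le K,\ n_{0i}-n_{ii}<k\le n_{0i}\}$ for $1\le k\le n_{00}$; $f_k(S)=\max(|U_k\cap S|,1)$; $f_{\rm free}(i)=(n_{ii}-n_{0i})^++(n_{0i}-n_{00})^+$, $f_{\rm free}(S)=\sum_{i\in S}f_{\rm free}(i)$. The constraint list $\Gamma$ consists of the individual constraints $I_i: r_i\le n_{ii}$ ($0\le i\le K$) and the sum-rate constraints $\Sigma_S: r_0+\sum_{i\in S}r_i\le f_{\rm free}(S)+\sum_{k=1}^{n_{00}}f_k(S)$ for nonempty $S\subseteq\{1,\dots,K\}$. A subset $A\subseteq\Gamma$ is consistent if there is a rate point $(r_0,\dots,r_K)$ that satisfies every constraint in $A$ with equality and violates no constraint of $\Gamma$. To each constraint $c$ associate $N_s(c),N_d(c)\subseteq\{1,\dots,n_{00}\}$: for $\Sigma_S$, $N_s=\{k:|U_k\cap S|\ge2\}$, $N_d=\{k:U_k\cap S=\varnothing\}$; for $I_i$, $i\ge1$, $N_s=\{k:i\in U_k\}$, $N_d=\varnothing$; for $I_0$, $N_s=\varnothing$, $N_d=\{1,\dots,n_{00}\}$. $A$ is compatible if for any $c,c'\in A$, $N_s(c)\cap N_d(c')=\varnothing$ and $N_s(c')\cap N_d(c)=\varnothing$.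 *)

theory Defs
  imports Main "HOL.Real"
begin

text \<open>Deterministic many-to-one interference channel with K+1 users 0..K.
  dg i = n_ii (direct gains, 0 <= i <= K), cg i = n_0i (cross gains, 1 <= i <= K).
  Values of dg, cg outside these ranges are irrelevant.
  Nat subtraction a - b is exactly (a - b)^+.\<close>

datatype constr = Ind nat | SumC "nat set"

definition U :: "nat \<Rightarrow> (nat \<Rightarrow> nat) \<Rightarrow> (nat \<Rightarrow> nat) \<Rightarrow> nat \<Rightarrow> nat set" where
  "U K dg cg k = {i. 1 \<le> i \<and> i \<le> K \<and> int (cg i) - int (dg i) < int k \<and> k \<le> cg i}"

definition fk :: "nat \<Rightarrow> (nat \<Rightarrow> nat) \<Rightarrow> (nat \<Rightarrow> nat) \<Rightarrow> nat \<Rightarrow> nat set \<Rightarrow> nat" where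
  "fk K dg cg k S = max (card (U K dg cg k \<inter> S)) 1"

definition ffree1 :: "(nat \<Rightarrow> nat) \<Rightarrow> (nat \<Rightarrow> nat) \<Rightarrow> nat \<Rightarrow> nat" where
  "ffree1 dg cg i = (dg i - cg i) + (cg i - dg 0)"

definition ffree :: "(nat \<Rightarrow> nat) \<Rightarrow> (nat \<Rightarrow> nat) \<Rightarrow> nat set \<Rightarrow> nat" where
  "ffree dg cg S = (\<Sum>i\<in>S. ffree1 dg cg i)"

definition Gamma :: "nat \<Rightarrow> constr set" where
  "Gamma K = {Ind i | i. i \<le> K} \<union> {SumC S | S. S \<noteq> {} \<and> S \<subseteq> {1..K}}"

fun lhs :: "(nat \<Rightarrow> real) \<Rightarrow> constr \<Rightarrow> real" where
  "lhs r (Ind i) = r i"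
| "lhs r (SumC S) = r 0 + (\<Sum>i\<in>S. r i)"

fun rhs :: "nat \<Rightarrow> (nat \<Rightarrow> nat) \<Rightarrow> (nat \<Rightarrow> nat) \<Rightarrow> constr \<Rightarrow> nat" where
  "rhs K dg cg (Ind i) = dg i"
| "rhs K dg cg (SumC S) = ffree dg cg S + (\<Sum>k=1..dg 0. fk K dg cg k S)"

definition consistent :: "nat \<Rightarrow> (nat \<Rightarrow> nat) \<Rightarrow> (nat \<Rightarrow> nat) \<Rightarrow> constr set \<Rightarrow> bool" where
  "consistent K dg cg A \<longleftrightarrow>
     (\<exists>r :: nat \<Rightarrow> real. (\<forall>i\<le>K. 0 \<le> r i) \<and>
        (\<forall>c\<in>A. lhs r c = real (rhs K dg cg c)) \<and>
        (\<forall>c\<in>Gamma K. lhs r c \<le> real (rhs K dg cg c)))"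

fun Ns :: "nat \<Rightarrow> (nat \<Rightarrow> nat) \<Rightarrow> (nat \<Rightarrow> nat) \<Rightarrow> constr \<Rightarrow> nat set" where
  "Ns K dg cg (SumC S) = {k. 1 \<le> k \<and> k \<le> dg 0 \<and> card (U K dg cg k \<inter> S) \<ge> 2}"
| "Ns K dg cg (Ind i) = (if i = 0 then {} else {k. 1 \<le> k \<and> k \<le> dg 0 \<and> i \<in> U K dg cg k})"

fun Nd :: "nat \<Rightarrow> (nat \<Rightarrow> nat) \<Rightarrow> (nat \<Rightarrow> nat) \<Rightarrow> constr \<Rightarrow> nat set" where
  "Nd K dg cg (SumC S) = {k. 1 \<le> k \<and> k \<le> dg 0 \<and> U K dg cg k \<inter> S = {}}"
| "Nd K dg cg (Ind i) = (if i = 0 then {1..dg 0} else {})"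

definition compatible :: "nat \<Rightarrow> (nat \<Rightarrow> nat) \<Rightarrow> (nat \<Rightarrow> nat) \<Rightarrow> constr set \<Rightarrow> bool" where
  "compatible K dg cg A \<longleftrightarrow>
     (\<forall>c\<in>A. \<forall>c'\<in>A. Ns K dg cg c \<inter> Nd K dg cg c' = {} \<and> Ns K dg cg c' \<inter> Nd K dg cg c = {})"

end

theory Submission
  imports Defs
begin

(* Receiver 0 has the signal levels 1..n_00 and user i occupies the
   levels in the interval (n_0i - n_ii, n_0i], i.e. i \<in> U_l.  If A is consistent,
   fix a feasible rate point r that is tight on every constraint of A.  For two
   tight constraints c, c' a common level k of Ns(c) and Nd(c') is impossible;
   the four combinations are refuted one by one:
   - I_i, I_0 and Sigma_S, I_0: the singleton bounds Sigma_{i} charge every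
     level of receiver 0 once, which is too little for a full user 0;
   - I_i, Sigma_T: adding i to T would violate Sigma_{T+i};
   - Sigma_S, Sigma_T: the users of S and T are redistributed into X, X' with
     the same union and intersection such that the level cost strictly drops;
     since rates and free levels are modular, Sigma_X or Sigma_X' is violated.
   The file first sets up levels and the single-user bounds, then treats the
   first three cases, then the exchange argument, and finally combines them. *)

(* User i occupies the levels l of receiver 0 with base i < l <= n_0i, where
   base i = n_0i - n_ii; so U_l is the set of users occupying level l. *)
definition base :: "(nat \<Rightarrow> nat) \<Rightarrow> (nat \<Rightarrow> nat) \<Rightarrow> nat \<Rightarrow> int" where
  "base dg cg i = int (cg i) - int (dg i)"

lemma U_iff:
  "i \<in> U K dg cg l \<longleftrightarrow> 1 \<le> i \<and> i \<le> K \<and> base dg cg i < int l \<and> l \<le> cg i"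
  by (simp add: U_def base_def)

lemma finite_U: "finite (U K dg cg l)"
  by (rule finite_subset[of _ "{1..K}"]) (auto simp: U_def)

definition feasible :: "nat \<Rightarrow> (nat \<Rightarrow> nat) \<Rightarrow> (nat \<Rightarrow> nat) \<Rightarrow> (nat \<Rightarrow> real) \<Rightarrow> bool" where
  "feasible K dg cg r \<longleftrightarrow> (\<forall>c\<in>Gamma K. lhs r c \<le> real (rhs K dg cg c))"

definition level_cost :: "nat \<Rightarrow> (nat \<Rightarrow> nat) \<Rightarrow> (nat \<Rightarrow> nat) \<Rightarrow> nat set \<Rightarrow> nat" where
  "level_cost K dg cg S = (\<Sum>l=1..dg 0. fk K dg cg l S)"

lemma feasible_SumC:
  assumes "feasible K dg cg r" "S \<noteq> {}" "S \<subseteq> {1..K}"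
  shows "r 0 + sum r S \<le> real (ffree dg cg S) + real (level_cost K dg cg S)"
proof -
  have "SumC S \<in> Gamma K" using assms(2,3) by (auto simp: Gamma_def)
  then show ?thesis using assms(1) by (auto simp: feasible_def level_cost_def)
qed

lemma tight_SumC:
  assumes "lhs r (SumC S) = real (rhs K dg cg (SumC S))"
  shows "r 0 + sum r S = real (ffree dg cg S) + real (level_cost K dg cg S)"
  using assms by (simp add: level_cost_def)

lemma fk_singleton: "fk K dg cg l {i} = 1"
  by (cases "i \<in> U K dg cg l") (auto simp: fk_def)

lemma feasible_single:
  assumes "feasible K dg cg r" "1 \<le> i" "i \<le> K"
  shows "r 0 + r i \<le> real (ffree1 dg cg i) + real (dg 0)"
  using feasible_SumC[OF assms(1), of "{i}"] assms(2,3)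
  by (simp add: ffree_def level_cost_def fk_singleton)

(* The n_ii levels of a user i that is seen at some level 1..n_00 split into
   its levels seen by receiver 0 and its free levels f_free(i). *)
lemma levels_count:
  assumes "i \<in> U K dg cg k" "1 \<le> k" "k \<le> dg 0"
  shows "card {l\<in>{1..dg 0}. i \<in> U K dg cg l} + ffree1 dg cg i = dg i"
proof -
  have "{l\<in>{1..dg 0}. i \<in> U K dg cg l} = {max 1 (cg i + 1 - dg i) .. min (dg 0) (cg i)}"
    using assms(1) by (auto simp: U_def)
  then show ?thesis using assms by (auto simp: U_def ffree1_def max_def min_def)
qed

(* Case I_i / I_0: if r_i = n_ii and r_0 = n_00, the bound Sigma_{i} forces
   n_ii <= f_free(i), so user i occupies no level 1..n_00. *)
lemma full_user_excludes_full_user0: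
  assumes "feasible K dg cg r" "r i = real (dg i)" "r 0 = real (dg 0)"
    and "i \<in> U K dg cg k" "1 \<le> k" "k \<le> dg 0"
  shows False
proof -
  have i: "1 \<le> i" "i \<le> K" using assms(4) by (auto simp: U_iff)
  have "dg i \<le> ffree1 dg cg i" using feasible_single[OF assms(1) i] assms(2,3) by simp
  moreover have "k \<in> {l\<in>{1..dg 0}. i \<in> U K dg cg l}" using assms(4-6) by simp
  then have "card {l\<in>{1..dg 0}. i \<in> U K dg cg l} \<noteq> 0" by (auto simp: card_eq_0_iff)
  ultimately show False using levels_count[OF assms(4-6)] by linarith
qed

(* Case Sigma_S / I_0: with r_0 = n_00 the singleton bounds give
   sum_S r_i <= f_free(S), but a shared level makes the level cost of S exceed n_00. *)
lemma shared_level_excludes_full_user0: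
  assumes feas: "feasible K dg cg r" and tS: "lhs r (SumC S) = real (rhs K dg cg (SumC S))"
    and r0: "r 0 = real (dg 0)" and sS: "S \<subseteq> {1..K}"
    and k: "k \<in> {1..dg 0}" and shared: "2 \<le> card (U K dg cg k \<inter> S)"
  shows False
proof -
  have "r i \<le> real (ffree1 dg cg i)" if "i \<in> S" for i
    using feasible_single[OF feas, of i] that sS r0 by auto
  then have "sum r S \<le> (\<Sum>i\<in>S. real (ffree1 dg cg i))" by (rule sum_mono)
  then have rates: "sum r S \<le> real (ffree dg cg S)" by (simp add: ffree_def)
  have "(\<Sum>l=1..dg 0. 1) < level_cost K dg cg S"
    unfolding level_cost_def
  proof (rule sum_strict_mono_ex1)
    show "\<forall>l\<in>{1..dg 0}. 1 \<le> fk K dg cg l S" by (simp add: fk_def)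
    have "1 < fk K dg cg k S" using shared by (simp add: fk_def)
    then show "\<exists>l\<in>{1..dg 0}. 1 < fk K dg cg l S" using k by blast
  qed simp
  then have "real (dg 0) + 1 \<le> real (level_cost K dg cg S)" by simp
  then show False using tight_SumC[OF tS] rates r0 by linarith
qed

lemma fk_insert_le:
  "fk K dg cg l (insert i T) \<le> fk K dg cg l T + (if i \<in> U K dg cg l then 1 else 0)"
proof -
  have "finite (U K dg cg l \<inter> T)" using finite_U by blast
  then show ?thesis by (auto simp: fk_def card_insert_if Int_insert_right)
qed

(* Case I_i / Sigma_T, with i at a level k that T leaves empty: compared with
   Sigma_T, the bound of Sigma_{T+i} grows by f_free(i) plus the number of
   levels of i at receiver 0, minus one for level k, i.e. by less than
   n_ii = r_i. *)
lemma user_level_excludes_empty_level: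
  assumes feas: "feasible K dg cg r" and ri: "r i = real (dg i)"
    and tT: "lhs r (SumC T) = real (rhs K dg cg (SumC T))" and sT: "T \<subseteq> {1..K}"
    and k: "k \<in> {1..dg 0}" and iU: "i \<in> U K dg cg k" and empty: "U K dg cg k \<inter> T = {}"
  shows False
proof -
  define C where "C = card {l\<in>{1..dg 0}. i \<in> U K dg cg l}"
  have i: "1 \<le> i" "i \<le> K" using iU by (auto simp: U_iff)
  have iT: "i \<notin> T" using empty iU by auto
  have fT: "finite T" using sT finite_subset by blast
  have "r 0 + sum r (insert i T) \<le> real (ffree dg cg (insert i T)) + real (level_cost K dg cg (insert i T))"
    using feasible_SumC[OF feas, of "insert i T"] i sT by auto
  then have bound: "r 0 + r i + sum r T
      \<le> real (ffree dg cg T) + real (ffree1 dg cg i) + real (level_cost K dg cg (insert i T))"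
    using iT fT by (simp add: ffree_def)
  have "level_cost K dg cg (insert i T)
      < (\<Sum>l=1..dg 0. fk K dg cg l T + (if i \<in> U K dg cg l then 1 else 0))"
    unfolding level_cost_def
  proof (rule sum_strict_mono_ex1)
    show "\<forall>l\<in>{1..dg 0}. fk K dg cg l (insert i T) \<le> fk K dg cg l T + (if i \<in> U K dg cg l then 1 else 0)"
      using fk_insert_le by blast
    have "U K dg cg k \<inter> insert i T = {i}" using iU empty by auto
    then have "fk K dg cg k (insert i T) < fk K dg cg k T + (if i \<in> U K dg cg k then 1 else 0)"
      using iU empty by (simp add: fk_def)
    then show "\<exists>l\<in>{1..dg 0}. fk K dg cg l (insert i T) < fk K dg cg l T + (if i \<in> U K dg cg l then 1 else 0)"
      using k by blast
  qed simp
  also have "\<dots> = level_cost K dg cg T + C"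
    by (simp add: level_cost_def C_def sum.distrib sum.inter_filter[symmetric])
  finally have "real (level_cost K dg cg (insert i T)) + 1 \<le> real (level_cost K dg cg T) + real C"
    by linarith
  moreover have "real C + real (ffree1 dg cg i) = real (dg i)"
    using levels_count[OF iU] k unfolding C_def by (metis atLeastAtMost_iff of_nat_add)
  ultimately show False using bound tight_SumC[OF tT] ri by linarith
qed

lemma sum_exchange:
  assumes "finite S" "finite T" "X \<union> X' = S \<union> T" "X \<inter> X' = S \<inter> T"
  shows "sum h X + sum h X' = sum h S + (sum h T :: 'a::comm_monoid_add)"
proof -
  have "finite X" "finite X'" using assms(1-3) by (metis finite_Un)+
  then have "sum h X + sum h X' = sum h (X \<union> X') + sum h (X \<inter> X')"
    by (rule sum.union_inter[symmetric])
  also have "\<dots> = sum h (S \<union> T) + sum h (S \<inter> T)" using assms(3,4) by simp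
  also have "\<dots> = sum h S + sum h T" by (rule sum.union_inter[OF assms(1,2)])
  finally show ?thesis .
qed

lemma card_Int_exchange:
  assumes "finite V" "X \<union> X' = S \<union> T" "X \<inter> X' = S \<inter> T"
  shows "card (V \<inter> X) + card (V \<inter> X') = card (V \<inter> S) + card (V \<inter> T)"
proof -
  have fin: "finite (V \<inter> Z)" for Z using assms(1) by simp
  have "card (V \<inter> X) + card (V \<inter> X') = card ((V \<inter> X) \<union> (V \<inter> X')) + card ((V \<inter> X) \<inter> (V \<inter> X'))"
    by (rule card_Un_Int[OF fin fin])
  also have "\<dots> = card ((V \<inter> S) \<union> (V \<inter> T)) + card ((V \<inter> S) \<inter> (V \<inter> T))"
    using assms(2,3) by (metis Int_Un_distrib Int_left_commute inf_sup_aci(2))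
  also have "\<dots> = card (V \<inter> S) + card (V \<inter> T)" by (rule card_Un_Int[OF fin fin, symmetric])
  finally show ?thesis .
qed

definition inherits :: "nat set \<Rightarrow> nat set \<Rightarrow> nat set \<Rightarrow> nat set \<Rightarrow> nat set \<Rightarrow> bool" where
  "inherits V S T X X' \<longleftrightarrow> (V \<inter> S \<noteq> {} \<longrightarrow> V \<inter> X \<noteq> {}) \<and> (V \<inter> T \<noteq> {} \<longrightarrow> V \<inter> X' \<noteq> {})"

lemma max_card_exchange_le:
  assumes "finite V" "X \<union> X' = S \<union> T" "X \<inter> X' = S \<inter> T"
    and "inherits V S T X X' \<or> inherits V S T X' X"
  shows "max (card (V \<inter> X)) 1 + max (card (V \<inter> X')) 1 \<le> max (card (V \<inter> S)) 1 + max (card (V \<inter> T)) 1"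
proof -
  have cards: "card (V \<inter> X) + card (V \<inter> X') = card (V \<inter> S) + card (V \<inter> T)"
    by (rule card_Int_exchange[OF assms(1-3)])
  have empty: "card (V \<inter> Z) = 0 \<longleftrightarrow> V \<inter> Z = {}" for Z using assms(1) by simp
  have occupied: "(V \<inter> S \<noteq> {} \<longrightarrow> V \<inter> X \<noteq> {}) \<and> (V \<inter> T \<noteq> {} \<longrightarrow> V \<inter> X' \<noteq> {}) \<or>
      (V \<inter> S \<noteq> {} \<longrightarrow> V \<inter> X' \<noteq> {}) \<and> (V \<inter> T \<noteq> {} \<longrightarrow> V \<inter> X \<noteq> {})"
    using assms(4) unfolding inherits_def .
  show ?thesis
  proof (cases "V \<inter> S = {}")
    case True
    then show ?thesis using cards occupied empty[of X] empty[of X'] empty[of S] empty[of T]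
      by (cases "V \<inter> T = {}") (auto simp: max_def)
  next
    case False
    then show ?thesis using cards occupied empty[of X] empty[of X'] empty[of S] empty[of T]
      by (cases "V \<inter> T = {}") (auto simp: max_def)
  qed
qed

lemma max_card_exchange_less:
  assumes "finite V" "X \<union> X' = S \<union> T" "X \<inter> X' = S \<inter> T"
    and "V \<inter> X \<noteq> {}" "V \<inter> X' \<noteq> {}" "V \<inter> T = {}"
  shows "max (card (V \<inter> X)) 1 + max (card (V \<inter> X')) 1 < max (card (V \<inter> S)) 1 + max (card (V \<inter> T)) 1"
proof -
  have empty: "card (V \<inter> Z) = 0 \<longleftrightarrow> V \<inter> Z = {}" for Z using assms(1) by simp
  show ?thesis
    using card_Int_exchange[OF assms(1-3)] assms(4-6) empty[of X] empty[of X'] empty[of T]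
    by (simp add: max_def)
qed

definition strict_exchange ::
    "nat \<Rightarrow> (nat \<Rightarrow> nat) \<Rightarrow> (nat \<Rightarrow> nat) \<Rightarrow> nat \<Rightarrow> nat set \<Rightarrow> nat set \<Rightarrow> nat set \<Rightarrow> nat set \<Rightarrow> bool" where
  "strict_exchange K dg cg k S T X X' \<longleftrightarrow>
     X \<union> X' = S \<union> T \<and> X \<inter> X' = S \<inter> T \<and>
     (\<forall>l. inherits (U K dg cg l) S T X X' \<or> inherits (U K dg cg l) S T X' X) \<and>
     U K dg cg k \<inter> X \<noteq> {} \<and> U K dg cg k \<inter> X' \<noteq> {}"

lemma level_cost_exchange:
  assumes ex: "strict_exchange K dg cg k S T X X'" and k: "k \<in> {1..dg 0}"
    and empty: "U K dg cg k \<inter> T = {}"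
  shows "level_cost K dg cg X + level_cost K dg cg X' < level_cost K dg cg S + level_cost K dg cg T"
proof -
  have un: "X \<union> X' = S \<union> T" and it: "X \<inter> X' = S \<inter> T"
    and inh: "\<And>l. inherits (U K dg cg l) S T X X' \<or> inherits (U K dg cg l) S T X' X"
    and kX: "U K dg cg k \<inter> X \<noteq> {}" and kX': "U K dg cg k \<inter> X' \<noteq> {}"
    using ex unfolding strict_exchange_def by blast+
  have "(\<Sum>l=1..dg 0. fk K dg cg l X + fk K dg cg l X') < (\<Sum>l=1..dg 0. fk K dg cg l S + fk K dg cg l T)"
  proof (rule sum_strict_mono_ex1)
    show "\<forall>l\<in>{1..dg 0}. fk K dg cg l X + fk K dg cg l X' \<le> fk K dg cg l S + fk K dg cg l T"
      unfolding fk_def using max_card_exchange_le[OF finite_U un it inh] by blast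
    have "fk K dg cg k X + fk K dg cg k X' < fk K dg cg k S + fk K dg cg k T"
      unfolding fk_def by (rule max_card_exchange_less[OF finite_U un it kX kX' empty])
    then show "\<exists>l\<in>{1..dg 0}. fk K dg cg l X + fk K dg cg l X' < fk K dg cg l S + fk K dg cg l T"
      using k by blast
  qed simp
  then show ?thesis by (simp add: level_cost_def sum.distrib)
qed

(* With Sigma_S and Sigma_T tight, a strict exchange would violate Sigma_X or
   Sigma_X', since rates and free levels are modular. *)
lemma exchange_contradiction:
  assumes feas: "feasible K dg cg r"
    and tS: "lhs r (SumC S) = real (rhs K dg cg (SumC S))"
    and tT: "lhs r (SumC T) = real (rhs K dg cg (SumC T))"
    and sS: "S \<subseteq> {1..K}" and sT: "T \<subseteq> {1..K}"
    and ex: "strict_exchange K dg cg k S T X X'" and k: "k \<in> {1..dg 0}"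
    and empty: "U K dg cg k \<inter> T = {}"
  shows False
proof -
  have un: "X \<union> X' = S \<union> T" and it: "X \<inter> X' = S \<inter> T"
    and nX: "X \<noteq> {}" and nX': "X' \<noteq> {}" using ex by (auto simp: strict_exchange_def)
  have fS: "finite S" and fT: "finite T" using sS sT finite_subset by blast+
  have sX: "X \<subseteq> {1..K}" and sX': "X' \<subseteq> {1..K}" using un sS sT by blast+
  have rates: "sum r X + sum r X' = sum r S + sum r T" by (rule sum_exchange[OF fS fT un it])
  have "ffree dg cg X + ffree dg cg X' = ffree dg cg S + ffree dg cg T"
    unfolding ffree_def by (rule sum_exchange[OF fS fT un it])
  then have free: "real (ffree dg cg X) + real (ffree dg cg X') = real (ffree dg cg S) + real (ffree dg cg T)"
    by (metis of_nat_add)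
  have "real (level_cost K dg cg X) + real (level_cost K dg cg X')
      < real (level_cost K dg cg S) + real (level_cost K dg cg T)"
    using level_cost_exchange[OF ex k empty] by (metis of_nat_add of_nat_less_iff)
  then show False
    using feasible_SumC[OF feas nX sX] feasible_SumC[OF feas nX' sX'] tight_SumC[OF tS] tight_SumC[OF tT]
      rates free by linarith
qed

lemma inherits_move:
  assumes "p \<in> S" "p \<noteq> j" "j \<in> V \<Longrightarrow> p \<in> V"
  shows "inherits V S T (S - {j}) (insert j T)"
  using assms unfolding inherits_def by blast

(* The main construction for S sharing level k and T avoiding it: p is a user of
   S at level k whose levels reach lowest, q one whose levels reach highest.
   Users of T lie entirely below or above k.
   Below k, p in X covers S and X' covers T; above k, q in X' covers S and X
   covers T. *)
context
  fixes K :: nat and dg cg :: "nat \<Rightarrow> nat" and k :: nat and S T X X' :: "nat set" and p q :: nat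
  assumes p: "p \<in> U K dg cg k \<inter> S" and q: "q \<in> U K dg cg k \<inter> S" and pq: "p \<noteq> q"
    and p_lowest: "\<And>x. x \<in> U K dg cg k \<inter> S \<Longrightarrow> base dg cg p \<le> base dg cg x"
    and q_highest: "\<And>x. x \<in> U K dg cg k \<inter> S \<Longrightarrow> cg x \<le> cg q"
    and empty: "U K dg cg k \<inter> T = {}"
    and X_def: "X = {x\<in>S. cg x < k} \<union> (U K dg cg k \<inter> S - {q}) \<union> {x\<in>T. k \<le> cg x}"
    and X'_def: "X' = {x\<in>S. x \<notin> U K dg cg k \<and> k \<le> cg x} \<union> {q} \<union> {x\<in>T. cg x < k}"
begin

lemma split_union: "X \<union> X' = S \<union> T"
  using q unfolding X_def X'_def by auto

lemma split_inter: "X \<inter> X' = S \<inter> T"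
proof
  have "k \<le> cg x" if "x \<in> U K dg cg k" for x using that by (simp add: U_iff)
  then show "X \<inter> X' \<subseteq> S \<inter> T" using q empty unfolding X_def X'_def by fastforce
  show "S \<inter> T \<subseteq> X \<inter> X'" using empty unfolding X_def X'_def by auto
qed

lemma split_below:
  assumes l: "l < k"
  shows "inherits (U K dg cg l) S T X X'"
  unfolding inherits_def
proof (intro conjI impI)
  assume "U K dg cg l \<inter> S \<noteq> {}"
  then obtain x where x: "x \<in> U K dg cg l" "x \<in> S" by auto
  show "U K dg cg l \<inter> X \<noteq> {}"
  proof (cases "cg x < k")
    case True
    then have "x \<in> X" using x(2) unfolding X_def by simp
    then show ?thesis using x(1) by blast
  next
    case False
    then have "x \<in> U K dg cg k \<inter> S" using x l by (simp add: U_iff)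
    then have "base dg cg p \<le> base dg cg x" by (rule p_lowest)
    then have "p \<in> U K dg cg l" using p x(1) l by (simp add: U_iff)
    moreover have "p \<in> X" using p pq unfolding X_def by simp
    ultimately show ?thesis by blast
  qed
next
  assume "U K dg cg l \<inter> T \<noteq> {}"
  then obtain x where x: "x \<in> U K dg cg l" "x \<in> T" by auto
  have "x \<notin> U K dg cg k" using x empty by auto
  then have "cg x < k" using x(1) l by (simp add: U_iff)
  then have "x \<in> X'" using x(2) unfolding X'_def by simp
  then show "U K dg cg l \<inter> X' \<noteq> {}" using x(1) by blast
qed

lemma split_above:
  assumes l: "k < l"
  shows "inherits (U K dg cg l) S T X' X"
  unfolding inherits_def
proof (intro conjI impI)
  assume "U K dg cg l \<inter> S \<noteq> {}"
  then obtain x where x: "x \<in> U K dg cg l" "x \<in> S" by auto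
  show "U K dg cg l \<inter> X' \<noteq> {}"
  proof (cases "x \<in> U K dg cg k")
    case False
    moreover have "k \<le> cg x" using x(1) l by (simp add: U_iff)
    ultimately have "x \<in> X'" using x(2) unfolding X'_def by simp
    then show ?thesis using x(1) by blast
  next
    case True
    then have "cg x \<le> cg q" using x(2) by (simp add: q_highest)
    then have "q \<in> U K dg cg l" using q x(1) l by (simp add: U_iff)
    moreover have "q \<in> X'" unfolding X'_def by simp
    ultimately show ?thesis by blast
  qed
next
  assume "U K dg cg l \<inter> T \<noteq> {}"
  then obtain x where x: "x \<in> U K dg cg l" "x \<in> T" by auto
  then have "k \<le> cg x" using l by (simp add: U_iff)
  then have "x \<in> X" using x(2) unfolding X_def by simp
  then show "U K dg cg l \<inter> X \<noteq> {}" using x(1) by blast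
qed

lemma split_at: "U K dg cg k \<inter> X \<noteq> {}" "U K dg cg k \<inter> X' \<noteq> {}"
  using p q pq unfolding X_def X'_def by auto

lemma split_exchange: "strict_exchange K dg cg k S T X X'"
proof -
  have "inherits (U K dg cg l) S T X X' \<or> inherits (U K dg cg l) S T X' X" for l
  proof (cases l k rule: linorder_cases)
    case equal
    then show ?thesis using split_at unfolding inherits_def by auto
  qed (use split_below split_above in auto)
  then show ?thesis using split_union split_inter split_at unfolding strict_exchange_def by blast
qed

end

(* A level shared in S and empty in T always admits a strict exchange: either one
   user p of S at level k occupies all levels of another one j, and j moves to T,
   or the split construction above applies. *)
lemma exists_strict_exchange:
  assumes shared: "2 \<le> card (U K dg cg k \<inter> S)" and empty: "U K dg cg k \<inter> T = {}"
  shows "\<exists>X X'. strict_exchange K dg cg k S T X X'"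
proof -
  define Sk where "Sk = U K dg cg k \<inter> S"
  have fin: "finite Sk" unfolding Sk_def using finite_U by blast
  have ne: "Sk \<noteq> {}" using shared unfolding Sk_def by auto
  have other: "\<exists>x\<in>Sk. x \<noteq> y" for y
  proof (rule ccontr)
    assume "\<not> ?thesis"
    then have "Sk \<subseteq> {y}" by auto
    then have "card Sk \<le> 1" using card_mono[of "{y}" Sk] by simp
    then show False using shared unfolding Sk_def by simp
  qed
  obtain p where p: "p \<in> Sk" and p_min: "base dg cg p = Min (base dg cg ` Sk)"
  proof -
    have "Min (base dg cg ` Sk) \<in> base dg cg ` Sk" using fin ne by simp
    then show ?thesis using that by force
  qed
  have p_lowest: "base dg cg p \<le> base dg cg x" if "x \<in> Sk" for x
    using p_min fin that by simp
  obtain q where q: "q \<in> Sk" and q_max: "cg q = Max (cg ` Sk)"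
  proof -
    have "Max (cg ` Sk) \<in> cg ` Sk" using fin ne by simp
    then show ?thesis using that by force
  qed
  have q_highest: "cg x \<le> cg q" if "x \<in> Sk" for x
    using q_max fin that by simp
  show ?thesis
  proof (cases "p = q")
    case True
    obtain j where j: "j \<in> Sk" "j \<noteq> p" using other by blast
    have "j \<in> U K dg cg l \<Longrightarrow> p \<in> U K dg cg l" for l
      using p_lowest[OF j(1)] q_highest[OF j(1)] True p j unfolding Sk_def by (auto simp: U_iff)
    then have "inherits (U K dg cg l) S T (S - {j}) (insert j T)" for l
      using inherits_move[of p S j] p j unfolding Sk_def by auto
    moreover have "j \<notin> T" using j empty unfolding Sk_def by auto
    ultimately have "strict_exchange K dg cg k S T (S - {j}) (insert j T)"
      using p j unfolding strict_exchange_def Sk_def by auto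
    then show ?thesis by blast
  next
    case False
    show ?thesis
      using split_exchange[OF p[unfolded Sk_def] q[unfolded Sk_def] False] p_lowest q_highest empty
      unfolding Sk_def by blast
  qed
qed

lemma shared_level_excludes_empty_level:
  assumes feas: "feasible K dg cg r"
    and tS: "lhs r (SumC S) = real (rhs K dg cg (SumC S))"
    and tT: "lhs r (SumC T) = real (rhs K dg cg (SumC T))"
    and sS: "S \<subseteq> {1..K}" and sT: "T \<subseteq> {1..K}"
    and k: "k \<in> {1..dg 0}" and shared: "2 \<le> card (U K dg cg k \<inter> S)"
    and empty: "U K dg cg k \<inter> T = {}"
  shows False
proof -
  obtain X X' where "strict_exchange K dg cg k S T X X'"
    using exists_strict_exchange[OF shared empty] by blast
  then show False using exchange_contradiction[OF feas tS tT sS sT _ k empty] by blast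
qed

(* Two constraints that are tight at a feasible point satisfy
   Ns(c) \<inter> Nd(c') = {}: Ns(I_0) and Nd(I_i), i >= 1, are empty, and the four
   remaining combinations are excluded above. *)
lemma tight_pair_disjoint:
  assumes feas: "feasible K dg cg r"
    and c: "c \<in> Gamma K" and c': "c' \<in> Gamma K"
    and tc: "lhs r c = real (rhs K dg cg c)" and tc': "lhs r c' = real (rhs K dg cg c')"
  shows "Ns K dg cg c \<inter> Nd K dg cg c' = {}"
proof (rule ccontr)
  assume "Ns K dg cg c \<inter> Nd K dg cg c' \<noteq> {}"
  then obtain k where kNs: "k \<in> Ns K dg cg c" and kNd: "k \<in> Nd K dg cg c'" by blast
  have sub: "S \<subseteq> {1..K}" if "SumC S \<in> Gamma K" for S using that by (auto simp: Gamma_def)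
  have r0: "r 0 = real (dg 0)" if "c' = Ind j" for j
    using kNd tc' that by (auto split: if_splits)
  show False
  proof (cases c)
    case (Ind i)
    then have k: "k \<in> {1..dg 0}" and iU: "i \<in> U K dg cg k" using kNs by (auto split: if_splits)
    have ri: "r i = real (dg i)" using tc Ind by simp
    show False
    proof (cases c')
      case (Ind j)
      then show False using full_user_excludes_full_user0[OF feas ri r0 iU] k by auto
    next
      case (SumC T)
      then show False using user_level_excludes_empty_level[OF feas ri _ _ k iU] tc' c' kNd sub by auto
    qed
  next
    case (SumC S)
    then have k: "k \<in> {1..dg 0}" and shared: "2 \<le> card (U K dg cg k \<inter> S)" using kNs by auto
    have tS: "lhs r (SumC S) = real (rhs K dg cg (SumC S))" using tc SumC by simp
    show False
    proof (cases c')
      case (Ind j)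
      then show False using shared_level_excludes_full_user0[OF feas tS r0 _ k shared] c SumC sub by auto
    next
      case (SumC T)
      then show False
        using shared_level_excludes_empty_level[OF feas tS _ _ _ k shared] tc' c c' \<open>c = SumC S\<close> kNd sub
        by auto
    qed
  qed
qed

theorem lemma3:
  fixes K :: nat and dg cg :: "nat \<Rightarrow> nat" and A :: "constr set"
  assumes "A \<subseteq> Gamma K"
    and "consistent K dg cg A"
  shows "compatible K dg cg A"
proof -
  obtain r :: "nat \<Rightarrow> real" where tight: "\<forall>c\<in>A. lhs r c = real (rhs K dg cg c)"
    and feas: "feasible K dg cg r"
    using assms(2) unfolding consistent_def feasible_def by blast
  show ?thesis
    unfolding compatible_def
    using tight_pair_disjoint[OF feas] assms(1) tight by blast
qed

end
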